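(* Let $f$ be a finitary Boolean function. Then for every $k\in\mathbb N$, $I_k(B_nf)\to I_k(f)$ as $n\to\infty$. If moreover $f$ is $p$-knowable for some $p>\tfrac12$, then $H(B_nf)\to H(f)$; and if $f$ is $p$-knowable for some $p>1$, then $I(B_nf)\to I(f)$.
   Context: Let $\Omega=\{-1,1\}$ and $\Omega^\infty=\{-1,1\}^{\mathbb N}$ with the uniform product probability measure; $\omega$ denotes a uniformly random element. A Boolean function is a measurable map $f:\Omega^\infty\to\Omega$. $\omega^{(k)}$ is $\omega$ with bit $k$ flipped; $I_k(f)=\mathbb P(f(\omega^{(k)})\ne f(\omega))$, $I(f)=\sum_kI_k(f)$, $H(f)=\sum_kI_k(f)^2$. A set $W\subseteq\mathbb N$ is a witness set for $f$ at $\omega$ if there is an event $A$ with $\mathbb P(A)=1$ such that for all $\tilde\omega\in A$: if $\tilde\omega_i=\omega_i$ for all $i\in W$ then $f(\tilde\omega)=f(\omega)$. $f$ is finitary if almost surely a finite witness set exists; then $W(f)(\omega)$ denotes the least finite witness set in the order: smaller maximum first, then smaller cardinality, then lexicographic. $f$ is $p$-knowable if it is finitary and $\mathbb E[(\max W(f))^p]<\infty$. $B_nf=\mathbf 1_{\{W(f)\subseteq[n]\}}f-\mathbf 1_{\{W(f)\not\subseteq[n]\}}$. *)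

theory Defs
  imports "HOL-Probability.Probability"
begin

text \<open>Coordinates are indexed by nat = {0,1,2,...}; the paper's [n] = {1..n} corresponds
  to the first n coordinates, i.e. {..<n}.\<close>

definition Omega :: "int set" where
  "Omega = {-1, 1}"

definition M :: "(nat \<Rightarrow> int) measure" where
  "M = PiM UNIV (\<lambda>_. uniform_count_measure Omega)"

definition boolean_function :: "((nat \<Rightarrow> int) \<Rightarrow> int) \<Rightarrow> bool" where
  "boolean_function f \<longleftrightarrow> f \<in> M \<rightarrow>\<^sub>M count_space Omega"

definition flipbit :: "nat \<Rightarrow> (nat \<Rightarrow> int) \<Rightarrow> (nat \<Rightarrow> int)" where
  "flipbit k \<omega> = fun_upd \<omega> k (uminus (\<omega> k))"

definition infl :: "((nat \<Rightarrow> int) \<Rightarrow> int) \<Rightarrow> nat \<Rightarrow> real" where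
  "infl f k = measure M {\<omega> \<in> space M. f (flipbit k \<omega>) \<noteq> f \<omega>}"

definition total_infl :: "((nat \<Rightarrow> int) \<Rightarrow> int) \<Rightarrow> ennreal" where
  "total_infl f = (\<Sum>k. ennreal (infl f k))"

definition H :: "((nat \<Rightarrow> int) \<Rightarrow> int) \<Rightarrow> ennreal" where
  "H f = (\<Sum>k. ennreal ((infl f k)\<^sup>2))"

definition is_witness :: "((nat \<Rightarrow> int) \<Rightarrow> int) \<Rightarrow> (nat \<Rightarrow> int) \<Rightarrow> nat set \<Rightarrow> bool" where
  "is_witness f \<omega> W \<longleftrightarrow>
     (\<exists>A \<in> sets M. emeasure M A = 1 \<and>
        (\<forall>\<omega>' \<in> A. (\<forall>i \<in> W. \<omega>' i = \<omega> i) \<longrightarrow> f \<omega>' = f \<omega>))"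

definition finitary :: "((nat \<Rightarrow> int) \<Rightarrow> int) \<Rightarrow> bool" where
  "finitary f \<longleftrightarrow> (AE \<omega> in M. \<exists>W. finite W \<and> is_witness f \<omega> W)"

definition maxi :: "nat set \<Rightarrow> nat" where
  "maxi A = (if A = {} then 0 else Max A)"

definition set_less :: "nat set \<Rightarrow> nat set \<Rightarrow> bool" where
  "set_less A B \<longleftrightarrow>
     maxi A < maxi B \<or>
     (maxi A = maxi B \<and> (card A < card B \<or>
       (card A = card B \<and>
        (sorted_list_of_set A, sorted_list_of_set B) \<in> lexord {(x, y). x < y})))"

text \<open>Least finite witness set; on the (null) set where no finite witness exists we use
  the convention W = UNIV.\<close>
definition Wf :: "((nat \<Rightarrow> int) \<Rightarrow> int) \<Rightarrow> (nat \<Rightarrow> int) \<Rightarrow> nat set" where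
  "Wf f \<omega> =
     (if \<exists>W. finite W \<and> is_witness f \<omega> W
      then (THE W. finite W \<and> is_witness f \<omega> W \<and>
              (\<forall>V. finite V \<and> is_witness f \<omega> V \<and> V \<noteq> W \<longrightarrow> set_less W V))
      else UNIV)"

definition knowable :: "real \<Rightarrow> ((nat \<Rightarrow> int) \<Rightarrow> int) \<Rightarrow> bool" where
  "knowable p f \<longleftrightarrow> finitary f \<and>
     (\<integral>\<^sup>+ \<omega>. ennreal (real (maxi (Wf f \<omega>)) powr p) \<partial>M) < \<infinity>"

definition B :: "nat \<Rightarrow> ((nat \<Rightarrow> int) \<Rightarrow> int) \<Rightarrow> ((nat \<Rightarrow> int) \<Rightarrow> int)" where
  "B n f = (\<lambda>\<omega>. if Wf f \<omega> \<subseteq> {..<n} then f \<omega> else -1)"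

end

theory Submission
  imports Defs
begin

text \<open>
  \<open>B n f\<close> differs from \<open>f\<close> only on the event that no witness lies in the first \<open>n\<close>
  coordinates, whose probability \<open>\<epsilon>\<^sub>n\<close> tends to \<open>0\<close> for finitary \<open>f\<close>; flipping a bit moves
  this event to one of the same probability, so \<open>\<bar>I\<^sub>k(B\<^sub>n f) - I\<^sub>k(f)\<bar> \<le> 2\<epsilon>\<^sub>n\<close>.
  Moreover \<open>I\<^sub>k(B\<^sub>n f) = 0\<close> for \<open>k \<ge> n\<close>, and \<open>I\<^sub>k(f) \<le> \<epsilon>\<^sub>k\<close> because outside that event a
  witness avoiding bit \<open>k\<close> exists; hence \<open>I\<^sub>k(B\<^sub>n f) \<le> 3\<epsilon>\<^sub>k\<close> uniformly in \<open>n\<close>.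
  For \<open>p\<close>-knowable \<open>f\<close>, Markov's inequality gives \<open>\<epsilon>\<^sub>k = O(k\<^sup>-\<^sup>p)\<close>, so \<open>\<epsilon>\<^sub>k\<^sup>m\<close> is
  summable when \<open>m p > 1\<close> and dominated convergence for series applies to \<open>\<Sum>\<^sub>k I\<^sub>k\<^sup>m\<close>
  with \<open>m = 2\<close> (the quantity \<open>H\<close>) and \<open>m = 1\<close> (the total influence).
\<close>

lemma (in finite_measure) abs_measure_diff_le:
  assumes "X \<in> sets M" "Y \<in> sets M" "Z \<in> sets M" "X \<subseteq> Y \<union> Z" "Y \<subseteq> X \<union> Z"
  shows "\<bar>measure M X - measure M Y\<bar> \<le> measure M Z"
proof -
  have le: "measure M U \<le> measure M V + measure M Z" if "U \<subseteq> V \<union> Z" "V \<in> sets M" for U V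
  proof -
    have "measure M U \<le> measure M (V \<union> Z)"
      using that assms(3) by (intro finite_measure_mono) auto
    also have "\<dots> \<le> measure M V + measure M Z"
      using that assms(3) by (intro measure_Un_le)
    finally show ?thesis .
  qed
  from le[OF assms(4,2)] le[OF assms(5,1)] show ?thesis
    by linarith
qed

lemma tendsto_suminf_ennreal_dominated:
  fixes c :: "nat \<Rightarrow> nat \<Rightarrow> real" and c' d :: "nat \<Rightarrow> real"
  assumes lim: "\<And>k. (\<lambda>n. c n k) \<longlonglongrightarrow> c' k"
    and bound: "\<And>n k. c n k \<le> d k" and nonneg: "\<And>n k. 0 \<le> c n k" and "summable d"
  shows "(\<lambda>n. \<Sum>k. ennreal (c n k)) \<longlonglongrightarrow> (\<Sum>k. ennreal (c' k))"
proof -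
  have "0 \<le> d k" for k
    using nonneg[of 0 k] bound[of 0 k] by linarith
  then have "(\<integral>\<^sup>+k. ennreal (d k) \<partial>count_space UNIV) < \<infinity>"
    using \<open>summable d\<close> by (simp add: nn_integral_count_space_nat suminf_ennreal2)
  then have "(\<lambda>n. \<integral>\<^sup>+k. ennreal (c n k) \<partial>count_space UNIV) \<longlonglongrightarrow> (\<integral>\<^sup>+k. ennreal (c' k) \<partial>count_space UNIV)"
    using bound lim
    by (intro nn_integral_dominated_convergence[where w = "\<lambda>k. ennreal (d k)"])
      (auto intro: ennreal_leI tendsto_ennrealI)
  then show ?thesis
    by (simp add: nn_integral_count_space_nat)
qed

section \<open>The product measure and bit flips\<close>

abbreviation coin :: "int measure" where
  "coin \<equiv> uniform_count_measure Omega"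

lemma finite_Omega [simp]: "finite Omega" and Omega_not_empty [simp]: "Omega \<noteq> {}"
  by (auto simp: Omega_def)

lemma uminus_in_Omega: "x \<in> Omega \<Longrightarrow> - x \<in> Omega"
  by (auto simp: Omega_def)

lemma prob_space_coin: "prob_space coin"
  by (rule prob_space_uniform_count_measure) auto

interpretation M: prob_space M
  unfolding M_def by (rule prob_space_PiM) (rule prob_space_coin)

lemma space_M: "space M = {\<omega>. \<forall>i. \<omega> i \<in> Omega}"
  by (auto simp: M_def space_PiM space_uniform_count_measure PiE_def extensional_def)

lemma measurable_coordinate [measurable]: "(\<lambda>\<omega>. \<omega> i) \<in> M \<rightarrow>\<^sub>M count_space Omega"
proof -
  have "(\<lambda>\<omega>. \<omega> i) \<in> M \<rightarrow>\<^sub>M coin"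
    unfolding M_def by measurable
  then show ?thesis
    by (simp add: measurable_def space_uniform_count_measure sets_uniform_count_measure)
qed

lemma measurable_uminus_coin: "uminus \<in> coin \<rightarrow>\<^sub>M coin"
  by (auto simp: measurable_def space_uniform_count_measure sets_uniform_count_measure uminus_in_Omega)

lemma distr_coin_uminus: "distr coin coin uminus = coin"
proof (rule measure_eqI)
  fix A assume "A \<in> sets (distr coin coin uminus)"
  then have A: "A \<subseteq> Omega"
    by (simp add: sets_uniform_count_measure)
  have "uminus -` A \<inter> space coin = uminus ` A"
    using A uminus_in_Omega by (force simp: space_uniform_count_measure)
  moreover have "card (uminus ` A) = card A"
    by (rule card_image) (simp add: inj_on_def)
  moreover have "uminus ` A \<subseteq> Omega"
    using A uminus_in_Omega by auto
  ultimately show "emeasure (distr coin coin uminus) A = emeasure coin A"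
    using A measurable_uminus_coin
    by (simp add: emeasure_distr sets_uniform_count_measure emeasure_uniform_count_measure)
qed simp

lemma distr_PiM_componentwise:
  assumes prob: "\<And>i. i \<in> I \<Longrightarrow> prob_space (N i)"
    and meas: "\<And>i. i \<in> I \<Longrightarrow> g i \<in> N i \<rightarrow>\<^sub>M N i"
    and preserving: "\<And>i. i \<in> I \<Longrightarrow> distr (N i) (N i) (g i) = N i"
  shows "distr (PiM I N) (PiM I N) (\<lambda>\<omega>. \<lambda>i\<in>I. g i (\<omega> i)) = PiM I N"
    (is "distr ?P ?P ?g = ?P")
proof (rule measure_eqI_PiM_infinite[symmetric, OF refl])
  interpret prob_space ?P
    using prob by (rule prob_space_PiM)
  show "finite_measure ?P"
    by unfold_locales
  have meas_g: "?g \<in> ?P \<rightarrow>\<^sub>M ?P"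
    using meas by (intro measurable_PiM_single') (auto simp: space_PiM PiE_iff intro!: measurable_space[OF meas])
  fix J A assume J: "finite J" "J \<subseteq> I" and A: "\<And>i. i \<in> J \<Longrightarrow> A i \<in> sets (N i)"
  define A' where "A' i = g i -` A i \<inter> space (N i)" for i
  have A': "i \<in> J \<Longrightarrow> A' i \<in> sets (N i)" for i
    using A J meas unfolding A'_def by (auto intro: measurable_sets)
  have "?g -` prod_emb I N J (Pi\<^sub>E J A) \<inter> space ?P = prod_emb I N J (Pi\<^sub>E J A')"
    using J by (auto simp: prod_emb_def space_PiM PiE_iff A'_def subset_eq intro!: measurable_space[OF meas])
  then have "emeasure (distr ?P ?P ?g) (prod_emb I N J (Pi\<^sub>E J A)) = (\<Prod>i\<in>J. emeasure (N i) (A' i))"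
    using J A A' meas_g prob by (simp add: emeasure_distr sets_PiM_I emeasure_PiM_emb subset_eq)
  also have "\<dots> = (\<Prod>i\<in>J. emeasure (N i) (A i))"
    using J A meas preserving
    by (intro prod.cong refl) (metis A'_def emeasure_distr subsetD)
  also have "\<dots> = emeasure ?P (prod_emb I N J (Pi\<^sub>E J A))"
    using J A prob by (simp add: emeasure_PiM_emb subset_eq)
  finally show "emeasure ?P (prod_emb I N J (Pi\<^sub>E J A)) = emeasure (distr ?P ?P ?g) (prod_emb I N J (Pi\<^sub>E J A))"
    by simp
qed simp_all

lemma flipbit_componentwise: "flipbit k = (\<lambda>\<omega>. \<lambda>i\<in>UNIV. (if i = k then uminus else (\<lambda>x. x)) (\<omega> i))"
  by (auto simp: flipbit_def fun_eq_iff)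

lemma measurable_flipbit [measurable]: "flipbit k \<in> M \<rightarrow>\<^sub>M M"
  unfolding M_def flipbit_componentwise
  using measurable_uminus_coin
  by (intro measurable_PiM_single') (auto simp: space_PiM PiE_iff space_uniform_count_measure uminus_in_Omega)

lemma distr_flipbit: "distr M M (flipbit k) = M"
  unfolding M_def flipbit_componentwise
  using prob_space_coin measurable_uminus_coin distr_coin_uminus
  by (intro distr_PiM_componentwise) (auto simp: distr_id)

lemma flipbit_flipbit [simp]: "flipbit k (flipbit k \<omega>) = \<omega>"
  by (auto simp: flipbit_def)

lemma flipbit_other [simp]: "i \<noteq> k \<Longrightarrow> flipbit k \<omega> i = \<omega> i"
  by (simp add: flipbit_def)

lemma flipbit_in_space: "\<omega> \<in> space M \<Longrightarrow> flipbit k \<omega> \<in> space M"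
  using measurable_space[OF measurable_flipbit] .

lemma AE_flipbit: "AE \<omega> in M. P \<omega> \<Longrightarrow> AE \<omega> in M. P (flipbit k \<omega>)"
  by (metis AE_distrD measurable_flipbit distr_flipbit)

lemma measure_flipbit_vimage: "A \<in> sets M \<Longrightarrow> measure M (flipbit k -` A \<inter> space M) = measure M A"
  using measure_distr[OF measurable_flipbit, of A k] by (simp add: distr_flipbit)

lemma sets_influence_event:
  assumes "boolean_function g"
  shows "{\<omega> \<in> space M. g (flipbit k \<omega>) \<noteq> g \<omega>} \<in> sets M"
proof -
  have "id \<circ> g \<in> M \<rightarrow>\<^sub>M count_space UNIV"
    using assms unfolding boolean_function_def by (rule measurable_comp) simp
  then have [measurable]: "g \<in> M \<rightarrow>\<^sub>M count_space UNIV"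
    by simp
  show ?thesis
    by measurable
qed

section \<open>The least witness set\<close>

lemma set_less_irrefl: "\<not> set_less A A"
  by (auto simp: set_less_def lexord_irreflexive)

lemma set_less_trans: "set_less X Y \<Longrightarrow> set_less Y Z \<Longrightarrow> set_less X Z"
proof -
  have "trans (lexord {(x, y::nat). x < y})"
    by (rule lexord_transI) (auto simp: trans_def)
  then show "set_less X Y \<Longrightarrow> set_less Y Z \<Longrightarrow> set_less X Z"
    unfolding set_less_def trans_def by (elim disjE conjE) (auto 0 3)
qed

lemma set_less_total:
  assumes "finite X" "finite Y" "X \<noteq> Y"
  shows "set_less X Y \<or> set_less Y X"
proof -
  have "sorted_list_of_set X \<noteq> sorted_list_of_set Y"
    using assms by (metis sorted_list_of_set.set_sorted_key_list_of_set)
  moreover have "total (lexord {(x, y::nat). x < y})"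
    by (rule total_lexord) (auto simp: total_on_def)
  ultimately show ?thesis
    unfolding set_less_def total_on_def by (metis UNIV_I linorder_neqE_nat)
qed

lemma subset_atMost_maxi: "finite A \<Longrightarrow> A \<subseteq> {..maxi A}"
  by (auto simp: maxi_def)

lemma set_less_subset_lessThan:
  assumes "finite X" "set_less X Y" "Y \<subseteq> {..<n}"
  shows "X \<subseteq> {..<n}"
proof (cases "Y = {}")
  case True
  then show ?thesis
    using assms(2) by (simp add: set_less_def maxi_def)
next
  case False
  then have "maxi Y < n"
    using assms(3) finite_subset[OF assms(3)] by (auto simp: maxi_def)
  moreover have "maxi X \<le> maxi Y"
    using assms(2) by (auto simp: set_less_def)
  ultimately show ?thesis
    using subset_atMost_maxi[OF assms(1)] by auto
qed

text \<open>Among finite sets of bounded maximum there are only finitely many, so the strict order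
  is well-founded there; a least element of smallest maximum is least overall.\<close>
lemma ex_set_less_least:
  assumes "\<exists>W. finite W \<and> P W"
  shows "\<exists>W. finite W \<and> P W \<and> (\<forall>V. finite V \<and> P V \<and> V \<noteq> W \<longrightarrow> set_less W V)"
proof -
  define m where "m = (LEAST m. \<exists>W. finite W \<and> P W \<and> maxi W = m)"
  define C where "C = {W. finite W \<and> P W \<and> maxi W = m}"
  have "C \<noteq> {}"
    unfolding C_def m_def by (rule LeastI2_ex) (use assms in auto)
  have "C \<subseteq> Pow {..m}"
    unfolding C_def using subset_atMost_maxi by auto
  then have "finite C"
    by (rule finite_subset) simp
  define r where "r = {(V, W). V \<in> C \<and> W \<in> C \<and> set_less V W}"
  have "r \<subseteq> C \<times> C"
    by (auto simp: r_def)
  then have "finite r"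
    using \<open>finite C\<close> by (blast intro: finite_subset)
  moreover have "acyclic r"
  proof -
    have "trans r"
      unfolding r_def trans_def using set_less_trans by blast
    then show ?thesis
      unfolding acyclic_def using set_less_irrefl by (simp add: r_def)
  qed
  ultimately have "wf r"
    by (rule finite_acyclic_wf)
  then obtain W where W: "W \<in> C" and min: "\<And>V. (V, W) \<in> r \<Longrightarrow> V \<notin> C"
    using \<open>C \<noteq> {}\<close> by (metis wfE_min all_not_in_conv)
  have "set_less W V" if V: "finite V" "P V" "V \<noteq> W" for V
  proof (cases "maxi V = m")
    case True
    then have "\<not> set_less V W"
      using min W V by (auto simp: r_def C_def)
    then show ?thesis
      using set_less_total[of W V] V W by (auto simp: C_def)
  next
    case False
    have "m \<le> maxi V"
      unfolding m_def by (rule Least_le) (use V in auto)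
    then show ?thesis
      using False W by (auto simp: set_less_def C_def)
  qed
  then show ?thesis
    using W by (auto simp: C_def)
qed

lemma Wf_least:
  assumes "\<exists>W. finite W \<and> is_witness f \<omega> W"
  shows "finite (Wf f \<omega>) \<and> is_witness f \<omega> (Wf f \<omega>) \<and>
    (\<forall>V. finite V \<and> is_witness f \<omega> V \<and> V \<noteq> Wf f \<omega> \<longrightarrow> set_less (Wf f \<omega>) V)"
proof -
  let ?least = "\<lambda>W. finite W \<and> is_witness f \<omega> W \<and>
    (\<forall>V. finite V \<and> is_witness f \<omega> V \<and> V \<noteq> W \<longrightarrow> set_less W V)"
  obtain W where "?least W"
    using ex_set_less_least[OF assms] by blast
  moreover have "V = W" if "?least V" for V
    using that \<open>?least W\<close> set_less_trans set_less_irrefl by metis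
  ultimately have "?least (THE W. ?least W)"
    by (rule theI)
  then show ?thesis
    using assms by (simp add: Wf_def)
qed

lemma Wf_subset_lessThan_iff: "Wf f \<omega> \<subseteq> {..<n} \<longleftrightarrow> (\<exists>V \<subseteq> {..<n}. is_witness f \<omega> V)"
proof (cases "\<exists>W. finite W \<and> is_witness f \<omega> W")
  case False
  then show ?thesis
    by (auto simp: Wf_def dest: finite_subset)
next
  case True
  note least = Wf_least[OF True]
  show ?thesis
  proof
    assume "Wf f \<omega> \<subseteq> {..<n}"
    then show "\<exists>V \<subseteq> {..<n}. is_witness f \<omega> V"
      using least by blast
  next
    assume "\<exists>V \<subseteq> {..<n}. is_witness f \<omega> V"
    then obtain V where V: "V \<subseteq> {..<n}" "is_witness f \<omega> V"
      by blast
    then show "Wf f \<omega> \<subseteq> {..<n}"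
      using least set_less_subset_lessThan[of "Wf f \<omega>" V n] finite_subset[OF V(1)] by auto
  qed
qed

lemma le_maxi_Wf:
  assumes "\<exists>W. finite W \<and> is_witness f \<omega> W" and "\<not> (\<exists>V \<subseteq> {..<n}. is_witness f \<omega> V)"
  shows "n \<le> maxi (Wf f \<omega>)"
  using assms Wf_least[OF assms(1)] subset_atMost_maxi[of "Wf f \<omega>"]
  unfolding Wf_subset_lessThan_iff[symmetric] by fastforce

section \<open>Witness sets and truncation\<close>

lemma is_witness_iff_AE: "is_witness f \<omega> W \<longleftrightarrow> (AE \<omega>' in M. (\<forall>i\<in>W. \<omega>' i = \<omega> i) \<longrightarrow> f \<omega>' = f \<omega>)"
proof
  assume "is_witness f \<omega> W"
  then obtain A where A: "A \<in> sets M" "emeasure M A = 1"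
    "\<forall>\<omega>'\<in>A. (\<forall>i\<in>W. \<omega>' i = \<omega> i) \<longrightarrow> f \<omega>' = f \<omega>"
    unfolding is_witness_def by blast
  then have "AE \<omega>' in M. \<omega>' \<in> A"
    by (intro M.AE_prob_1) (simp add: M.emeasure_eq_measure)
  then show "AE \<omega>' in M. (\<forall>i\<in>W. \<omega>' i = \<omega> i) \<longrightarrow> f \<omega>' = f \<omega>"
    by eventually_elim (use A in blast)
next
  assume "AE \<omega>' in M. (\<forall>i\<in>W. \<omega>' i = \<omega> i) \<longrightarrow> f \<omega>' = f \<omega>"
  then obtain N where N: "{\<omega>'\<in>space M. \<not> ((\<forall>i\<in>W. \<omega>' i = \<omega> i) \<longrightarrow> f \<omega>' = f \<omega>)} \<subseteq> N"
    "emeasure M N = 0" "N \<in> sets M"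
    by (rule AE_E)
  then have "emeasure M (space M - N) = 1"
    by (simp add: emeasure_compl M.emeasure_space_1)
  then show "is_witness f \<omega> W"
    unfolding is_witness_def using N by (intro bexI[of _ "space M - N"]) auto
qed

lemma is_witness_cong:
  "is_witness f \<omega> W \<Longrightarrow> \<forall>i\<in>W. \<omega>' i = \<omega> i \<Longrightarrow> f \<omega>' = f \<omega> \<Longrightarrow> is_witness f \<omega>' W"
  unfolding is_witness_def by auto

text \<open>Whether \<open>W\<close> is a witness at \<open>\<omega>\<close> depends only on the finitely many pairs
  \<open>(restrict \<omega> W, f \<omega>)\<close>; the pairs that qualify are the forced patterns.\<close>
definition forced_patterns :: "((nat \<Rightarrow> int) \<Rightarrow> int) \<Rightarrow> nat set \<Rightarrow> ((nat \<Rightarrow> int) \<times> int) set" where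
  "forced_patterns f W = {(x, v) \<in> (\<Pi>\<^sub>E i\<in>W. Omega) \<times> Omega.
     AE \<omega> in M. (\<forall>i\<in>W. \<omega> i = x i) \<longrightarrow> f \<omega> = v}"

lemma finite_forced_patterns: "finite W \<Longrightarrow> finite (forced_patterns f W)"
  unfolding forced_patterns_def
  by (rule finite_subset[of _ "(\<Pi>\<^sub>E i\<in>W. Omega) \<times> Omega"]) (auto intro!: finite_PiE)

text \<open>\<open>decided f n\<close> is the event \<open>W(f) \<subseteq> [n]\<close> of the paper (see \<open>B_eq_decided\<close>), phrased
  without the least witness so that its measurability is evident.\<close>
definition decided :: "((nat \<Rightarrow> int) \<Rightarrow> int) \<Rightarrow> nat \<Rightarrow> (nat \<Rightarrow> int) set" where
  "decided f n = {\<omega> \<in> space M. \<exists>V \<subseteq> {..<n}. is_witness f \<omega> V}"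

definition undecided_prob :: "((nat \<Rightarrow> int) \<Rightarrow> int) \<Rightarrow> nat \<Rightarrow> real" where
  "undecided_prob f n = measure M (space M - decided f n)"

lemma decided_mono: "m \<le> n \<Longrightarrow> decided f m \<subseteq> decided f n"
  unfolding decided_def by auto (meson lessThan_subset_iff order_trans)

lemma undecided_prob_nonneg: "0 \<le> undecided_prob f n"
  by (simp add: undecided_prob_def)

lemma B_eq_decided: "B n f \<omega> = (if \<omega> \<in> decided f n then f \<omega> else -1)" if "\<omega> \<in> space M"
  using that by (simp add: B_def decided_def Wf_subset_lessThan_iff)

context
  fixes f :: "(nat \<Rightarrow> int) \<Rightarrow> int"
  assumes boolean: "boolean_function f"
begin

lemma measurable_boolean [measurable]: "f \<in> M \<rightarrow>\<^sub>M count_space Omega"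
  using boolean by (simp add: boolean_function_def)

lemma restrict_in_forced_patterns:
  "\<omega> \<in> space M \<Longrightarrow> is_witness f \<omega> W \<Longrightarrow> (restrict \<omega> W, f \<omega>) \<in> forced_patterns f W"
  using measurable_space[OF measurable_boolean]
  by (auto simp: forced_patterns_def is_witness_iff_AE space_M)

lemma sets_is_witness:
  assumes "finite W"
  shows "{\<omega> \<in> space M. is_witness f \<omega> W} \<in> sets M"
proof -
  have "{\<omega> \<in> space M. is_witness f \<omega> W} =
      (\<Union>p\<in>forced_patterns f W. {\<omega> \<in> space M. (\<forall>i\<in>W. \<omega> i = fst p i) \<and> f \<omega> = snd p})"
  proof (intro set_eqI iffI)
    fix \<omega> assume "\<omega> \<in> {\<omega> \<in> space M. is_witness f \<omega> W}"
    then show "\<omega> \<in> (\<Union>p\<in>forced_patterns f W. {\<omega> \<in> space M. (\<forall>i\<in>W. \<omega> i = fst p i) \<and> f \<omega> = snd p})"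
      using restrict_in_forced_patterns by (intro UN_I[of "(restrict \<omega> W, f \<omega>)"]) auto
  next
    fix \<omega> assume "\<omega> \<in> (\<Union>p\<in>forced_patterns f W. {\<omega> \<in> space M. (\<forall>i\<in>W. \<omega> i = fst p i) \<and> f \<omega> = snd p})"
    then show "\<omega> \<in> {\<omega> \<in> space M. is_witness f \<omega> W}"
      by (auto simp: forced_patterns_def is_witness_iff_AE)
  qed
  also have "\<dots> \<in> sets M"
    using assms finite_forced_patterns[OF assms] by (intro sets.finite_UN) auto
  finally show ?thesis .
qed

lemma AE_flipbit_outside_witness:
  assumes "finite W" "k \<notin> W"
  shows "AE \<omega> in M. is_witness f \<omega> W \<longrightarrow> f (flipbit k \<omega>) = f \<omega>"
proof -
  have "AE \<omega> in M. (\<forall>i\<in>W. \<omega> i = fst p i) \<longrightarrow> f (flipbit k \<omega>) = snd p"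
    if "p \<in> forced_patterns f W" for p
  proof -
    have "AE \<omega> in M. (\<forall>i\<in>W. flipbit k \<omega> i = fst p i) \<longrightarrow> f (flipbit k \<omega>) = snd p"
      using that unfolding forced_patterns_def by (intro AE_flipbit) auto
    moreover have "flipbit k \<omega> i = \<omega> i" if "i \<in> W" for i \<omega>
      using assms(2) that by (auto simp: flipbit_def)
    ultimately show ?thesis
      by simp
  qed
  then have "AE \<omega> in M. \<forall>p\<in>forced_patterns f W. (\<forall>i\<in>W. \<omega> i = fst p i) \<longrightarrow> f (flipbit k \<omega>) = snd p"
    using finite_forced_patterns[OF assms(1)] by (simp add: eventually_ball_finite)
  then show ?thesis
    using AE_space
  proof eventually_elim
    case (elim \<omega>)
    show ?case
    proof
      assume "is_witness f \<omega> W"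
      with elim(2) have "(restrict \<omega> W, f \<omega>) \<in> forced_patterns f W"
        by (rule restrict_in_forced_patterns)
      then show "f (flipbit k \<omega>) = f \<omega>"
        using elim(1) by fastforce
    qed
  qed
qed

lemma sets_decided [measurable]: "decided f n \<in> sets M"
proof -
  have "decided f n = (\<Union>V\<in>Pow {..<n}. {\<omega> \<in> space M. is_witness f \<omega> V})"
    by (auto simp: decided_def)
  also have "\<dots> \<in> sets M"
    using boolean by (intro sets.finite_UN) (auto intro: sets_is_witness finite_subset)
  finally show ?thesis .
qed

lemma boolean_function_B: "boolean_function (B n f)"
proof -
  have "(\<lambda>\<omega>. if \<omega> \<in> decided f n then f \<omega> else -1) \<in> M \<rightarrow>\<^sub>M count_space Omega"
    using sets_decided by (intro measurable_If_set measurable_boolean measurable_const) (auto simp: Omega_def)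
  then show ?thesis
    unfolding boolean_function_def by (rule measurable_cong[THEN iffD1, rotated]) (simp add: B_eq_decided)
qed

lemma undecided_prob_antimono: "m \<le> n \<Longrightarrow> undecided_prob f n \<le> undecided_prob f m"
  unfolding undecided_prob_def using decided_mono[of m n f]
  by (intro M.finite_measure_mono) auto

lemma undecided_prob_tendsto_0:
  assumes "finitary f"
  shows "undecided_prob f \<longlonglongrightarrow> 0"
proof -
  have "undecided_prob f \<longlonglongrightarrow> measure M (\<Inter>n. space M - decided f n)"
    unfolding undecided_prob_def using decided_mono
    by (intro M.finite_Lim_measure_decseq) (auto simp: decseq_def)
  moreover have "AE \<omega> in M. \<not> (\<forall>n. \<omega> \<notin> decided f n)"
    using assms AE_space unfolding finitary_def
  proof eventually_elim
    case (elim \<omega>)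
    then obtain W n where "is_witness f \<omega> W" "W \<subseteq> {..<n}"
      using finite_nat_bounded by blast
    then show ?case
      using elim by (auto simp: decided_def)
  qed
  then have "measure M {\<omega> \<in> space M. \<forall>n. \<omega> \<notin> decided f n} = 0"
    by (rule M.prob_eq_0_AE)
  moreover have "(\<Inter>n. space M - decided f n) = {\<omega> \<in> space M. \<forall>n. \<omega> \<notin> decided f n}"
    by auto
  ultimately show ?thesis
    by simp
qed

text \<open>Markov's inequality for \<open>maxi (Wf f \<omega>) powr p\<close>, which need not be measurable: it
  bounds the indicator of the undecided set pointwise almost everywhere.\<close>
lemma undecided_prob_le_powr:
  assumes "knowable p f" "0 < p" "0 < n"
  shows "undecided_prob f n \<le> enn2real (\<integral>\<^sup>+\<omega>. ennreal (real (maxi (Wf f \<omega>)) powr p) \<partial>M) / real n powr p"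
proof -
  define I where "I = (\<integral>\<^sup>+\<omega>. ennreal (real (maxi (Wf f \<omega>)) powr p) \<partial>M)"
  have "I < \<infinity>" and finitary: "AE \<omega> in M. \<exists>W. finite W \<and> is_witness f \<omega> W"
    using assms(1) by (auto simp: knowable_def finitary_def I_def)
  have "AE \<omega> in M. ennreal (real n powr p) * indicator (space M - decided f n) \<omega>
      \<le> ennreal (real (maxi (Wf f \<omega>)) powr p)"
    using finitary AE_space
  proof eventually_elim
    case (elim \<omega>)
    show ?case
    proof (cases "\<omega> \<in> decided f n")
      case False
      then have "n \<le> maxi (Wf f \<omega>)"
        using elim le_maxi_Wf by (auto simp: decided_def)
      then have "real n powr p \<le> real (maxi (Wf f \<omega>)) powr p"
        using assms(2) by (intro powr_mono2) auto
      then show ?thesis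
        using False elim by (simp add: ennreal_leI)
    qed simp
  qed
  then have "ennreal (real n powr p) * emeasure M (space M - decided f n) \<le> I"
    unfolding I_def using boolean
    by (subst nn_integral_cmult_indicator[symmetric]) (auto intro: nn_integral_mono_AE)
  then have "ennreal (real n powr p * undecided_prob f n) \<le> ennreal (enn2real I)"
    using \<open>I < \<infinity>\<close> by (simp add: M.emeasure_eq_measure undecided_prob_def ennreal_mult'')
  then have "real n powr p * undecided_prob f n \<le> enn2real I"
    by (simp add: ennreal_le_iff)
  then show ?thesis
    using assms(3) by (simp add: I_def field_simps)
qed

lemma summable_undecided_prob_power:
  assumes "knowable p f" "0 < p" "1 < real m * p"
  shows "summable (\<lambda>n. undecided_prob f n ^ m)"
proof -
  define K where "K = enn2real (\<integral>\<^sup>+\<omega>. ennreal (real (maxi (Wf f \<omega>)) powr p) \<partial>M)"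
  have "summable (\<lambda>n. K ^ m * real n powr (- (real m * p)))"
    using assms(3) by (intro summable_mult) (simp add: summable_real_powr_iff)
  moreover have "norm (undecided_prob f n ^ m) \<le> K ^ m * real n powr (- (real m * p))" if "1 \<le> n" for n
  proof -
    have "undecided_prob f n \<le> K / real n powr p"
      using that assms by (simp add: K_def undecided_prob_le_powr)
    then have "undecided_prob f n ^ m \<le> (K / real n powr p) ^ m"
      by (intro power_mono undecided_prob_nonneg)
    also have "\<dots> = K ^ m * real n powr (- (real m * p))"
      using that by (simp add: divide_inverse power_mult_distrib power_inverse powr_power powr_minus)
    finally show ?thesis
      by (simp add: undecided_prob_nonneg)
  qed
  ultimately show ?thesis
    by (rule summable_comparison_test'[where N = 1])
qed

section \<open>Influences of the truncations\<close>

lemma abs_infl_B_diff_le: "\<bar>infl (B n f) k - infl f k\<bar> \<le> 2 * undecided_prob f n"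
proof -
  define E where "E = space M - decided f n"
  define E' where "E' = flipbit k -` E \<inter> space M"
  have sets: "E \<in> sets M" "E' \<in> sets M"
    using boolean unfolding E_def E'_def by (auto intro: measurable_sets[OF measurable_flipbit])
  have "B n f \<omega> = f \<omega> \<and> B n f (flipbit k \<omega>) = f (flipbit k \<omega>)"
    if "\<omega> \<in> space M - (E \<union> E')" for \<omega>
    using that flipbit_in_space by (auto simp: E_def E'_def B_eq_decided)
  then have "\<bar>infl (B n f) k - infl f k\<bar> \<le> measure M (E \<union> E')"
    unfolding infl_def using sets boolean boolean_function_B
    by (intro M.abs_measure_diff_le sets_influence_event) auto
  also have "\<dots> \<le> measure M E + measure M E'"
    using sets by (rule measure_Un_le)
  also have "measure M E' = measure M E"
    unfolding E'_def using sets(1) by (rule measure_flipbit_vimage)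
  finally show ?thesis
    by (simp add: E_def undecided_prob_def)
qed

lemma AE_decided_flipbit:
  assumes "n \<le> k"
  shows "AE \<omega> in M. \<omega> \<in> decided f n \<longrightarrow> f (flipbit k \<omega>) = f \<omega> \<and> flipbit k \<omega> \<in> decided f n"
proof -
  have "AE \<omega> in M. is_witness f \<omega> V \<longrightarrow> f (flipbit k \<omega>) = f \<omega>" if "V \<subseteq> {..<n}" for V
  proof (rule AE_flipbit_outside_witness)
    show "finite V"
      using that finite_subset by blast
    show "k \<notin> V"
      using that assms by auto
  qed
  then have "AE \<omega> in M. \<forall>V\<in>Pow {..<n}. is_witness f \<omega> V \<longrightarrow> f (flipbit k \<omega>) = f \<omega>"
    by (intro eventually_ball_finite) auto
  then show ?thesis
    using AE_space
  proof eventually_elim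
    case (elim \<omega>)
    show ?case
    proof
      assume "\<omega> \<in> decided f n"
      then obtain V where V: "V \<subseteq> {..<n}" "is_witness f \<omega> V"
        by (auto simp: decided_def)
      then have "f (flipbit k \<omega>) = f \<omega>"
        using elim(1) by blast
      moreover have "\<forall>i\<in>V. flipbit k \<omega> i = \<omega> i"
        using V(1) assms by (intro ballI flipbit_other) auto
      ultimately have "is_witness f (flipbit k \<omega>) V"
        using V(2) is_witness_cong by blast
      then show "f (flipbit k \<omega>) = f \<omega> \<and> flipbit k \<omega> \<in> decided f n"
        using \<open>f (flipbit k \<omega>) = f \<omega>\<close> V(1) flipbit_in_space[OF elim(2)] by (auto simp: decided_def)
    qed
  qed
qed

lemma infl_B_eq_0:
  assumes "n \<le> k"
  shows "infl (B n f) k = 0"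
proof -
  have "AE \<omega> in M. B n f (flipbit k \<omega>) = B n f \<omega>"
    using AE_decided_flipbit[OF assms] AE_flipbit[OF AE_decided_flipbit[OF assms], of k] AE_space
  proof eventually_elim
    case (elim \<omega>)
    then show ?case
      using flipbit_in_space[OF elim(3)] by (cases "\<omega> \<in> decided f n") (auto simp: B_eq_decided)
  qed
  then show ?thesis
    unfolding infl_def by (intro M.prob_eq_0_AE) simp
qed

lemma infl_le_undecided_prob: "infl f k \<le> undecided_prob f k"
proof -
  define D where "D = {\<omega> \<in> space M. f (flipbit k \<omega>) \<noteq> f \<omega>}"
  have "AE \<omega> in M. \<not> (\<omega> \<in> D \<and> \<omega> \<in> decided f k)"
    using AE_decided_flipbit[OF order_refl] by eventually_elim (auto simp: D_def)
  then have "measure M {\<omega> \<in> space M. \<omega> \<in> D \<and> \<omega> \<in> decided f k} = 0"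
    by (rule M.prob_eq_0_AE)
  moreover have "{\<omega> \<in> space M. \<omega> \<in> D \<and> \<omega> \<in> decided f k} = D \<inter> decided f k"
    by (auto simp: D_def)
  moreover have "measure M D \<le> measure M (D \<inter> decided f k) + measure M (space M - decided f k)"
    using boolean sets_influence_event[OF boolean] unfolding D_def
    by (intro order_trans[OF M.finite_measure_mono measure_Un_le]) auto
  ultimately show ?thesis
    unfolding infl_def undecided_prob_def D_def[symmetric] by simp
qed

lemma infl_B_le: "infl (B n f) k \<le> 3 * undecided_prob f k"
proof (cases "n \<le> k")
  case True
  then show ?thesis
    by (simp add: infl_B_eq_0 undecided_prob_def)
next
  case False
  then have "undecided_prob f n \<le> undecided_prob f k"
    by (intro undecided_prob_antimono) auto
  then show ?thesis
    using abs_infl_B_diff_le[of n k] infl_le_undecided_prob[of k] by (simp add: abs_le_iff)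
qed

lemma infl_B_tendsto:
  assumes "finitary f"
  shows "(\<lambda>n. infl (B n f) k) \<longlonglongrightarrow> infl f k"
proof -
  have "(\<lambda>n. infl (B n f) k - infl f k) \<longlonglongrightarrow> 0"
  proof (rule Lim_null_comparison)
    show "\<forall>\<^sub>F n in sequentially. norm (infl (B n f) k - infl f k) \<le> 2 * undecided_prob f n"
      by (simp add: abs_infl_B_diff_le)
    show "(\<lambda>n. 2 * undecided_prob f n) \<longlonglongrightarrow> 0"
      using tendsto_mult_right_zero[OF undecided_prob_tendsto_0[OF assms]] .
  qed
  then show ?thesis
    by (simp add: LIM_zero_iff)
qed

lemma tendsto_suminf_infl_B_power:
  assumes "knowable p f" "0 < p" "1 < real m * p"
  shows "(\<lambda>n. \<Sum>k. ennreal (infl (B n f) k ^ m)) \<longlonglongrightarrow> (\<Sum>k. ennreal (infl f k ^ m))"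
proof (rule tendsto_suminf_ennreal_dominated)
  show "(\<lambda>n. infl (B n f) k ^ m) \<longlonglongrightarrow> infl f k ^ m" for k
    using assms(1) by (intro tendsto_power infl_B_tendsto) (simp add: knowable_def)
  show "infl (B n f) k ^ m \<le> 3 ^ m * undecided_prob f k ^ m" for n k
    unfolding power_mult_distrib[symmetric] by (intro power_mono infl_B_le) (simp add: infl_def)
  show "0 \<le> infl (B n f) k ^ m" for n k
    by (simp add: infl_def)
  show "summable (\<lambda>k. 3 ^ m * undecided_prob f k ^ m)"
    using assms by (intro summable_mult summable_undecided_prob_power)
qed

end

theorem mainTheorem13:
  fixes f :: "(nat \<Rightarrow> int) \<Rightarrow> int"
  assumes "boolean_function f" and "finitary f"
  shows "(\<forall>k. (\<lambda>n. infl (B n f) k) \<longlonglongrightarrow> infl f k)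
     \<and> ((\<exists>p::real. p > 1/2 \<and> knowable p f) \<longrightarrow> (\<lambda>n. H (B n f)) \<longlonglongrightarrow> H f)
     \<and> ((\<exists>p::real. p > 1 \<and> knowable p f) \<longrightarrow> (\<lambda>n. total_infl (B n f)) \<longlonglongrightarrow> total_infl f)"
proof (intro conjI allI impI)
  show "(\<lambda>n. infl (B n f) k) \<longlonglongrightarrow> infl f k" for k
    using assms by (rule infl_B_tendsto)
next
  assume "\<exists>p. p > 1/2 \<and> knowable p f"
  then obtain p where "p > 1/2" "knowable p f"
    by blast
  then have "(\<lambda>n. \<Sum>k. ennreal (infl (B n f) k ^ 2)) \<longlonglongrightarrow> (\<Sum>k. ennreal (infl f k ^ 2))"
    by (intro tendsto_suminf_infl_B_power[OF assms(1)]) auto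
  then show "(\<lambda>n. H (B n f)) \<longlonglongrightarrow> H f"
    by (simp only: H_def)
next
  assume "\<exists>p. p > 1 \<and> knowable p f"
  then obtain p where "p > 1" "knowable p f"
    by blast
  then have "(\<lambda>n. \<Sum>k. ennreal (infl (B n f) k ^ 1)) \<longlonglongrightarrow> (\<Sum>k. ennreal (infl f k ^ 1))"
    by (intro tendsto_suminf_infl_B_power[OF assms(1)]) auto
  then show "(\<lambda>n. total_infl (B n f)) \<longlonglongrightarrow> total_infl f"
    by (simp add: total_infl_def)
qed

end
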